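(* Let $G=(V,E,w_G)$ be a directed graph with non-negative integer edge weights, $n=|V|$, $s\in V$, and $1\le h\le n$ an integer. Let $C\subseteq V$ contain $s$ and, for every pair of nodes $u,v$ for which the shortest path from $u$ to $v$ in $G$ consists of exactly $\lceil h/2\rceil$ nodes, at least one node of one of these shortest paths. For each $x\in C$ let $\tilde d(x,\cdot)$ satisfy $\mathrm{dist}_G(x,v)\le \tilde d(x,v)\le 2\,\mathrm{dist}^h_G(x,v)$ for all $v\in V$. Let $H=(C,C^2,w_H)$ with $w_H(x,y)=\tilde d(x,y)$. Let $G'=(V,E\cup(\{s\}\times C),w_{G'})$ where $w_{G'}(u,v)=\mathrm{dist}_H(u,v)$ for $(u,v)\in(\{s\}\times C)\setminus E$, $w_{G'}(u,v)=2w_G(u,v)$ for $(u,v)\in E\setminus(\{s\}\times C)$, and $w_{G'}(u,v)=\min(\mathrm{dist}_H(u,v),2w_G(u,v))$ for $(u,v)\in E\cap(\{s\}\times C)$. Then for every node $v\in V$, $\mathrm{dist}_G(s,v)\le \mathrm{dist}_{G'}(s,v)\le 2\,\mathrm{dist}_G(s,v)$.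
   Context: For a weighted directed graph, $\mathrm{dist}(u,v)$ denotes the minimum weight of a directed path from $u$ to $v$. For an integer $h\ge1$, the $h$-hop distance $\mathrm{dist}^h(u,v)$ is the minimum weight among all directed paths from $u$ to $v$ with at most $h$ edges. *)

theory Defs
  imports Main "HOL-Library.Extended_Nat"
begin

definition is_path :: "'a set \<Rightarrow> ('a \<times> 'a) set \<Rightarrow> 'a list \<Rightarrow> bool" where
  "is_path V E p \<longleftrightarrow> p \<noteq> [] \<and> set p \<subseteq> V \<and> distinct p \<and>
     (\<forall>i. Suc i < length p \<longrightarrow> (p ! i, p ! Suc i) \<in> E)"

definition path_weight :: "('a \<Rightarrow> 'a \<Rightarrow> enat) \<Rightarrow> 'a list \<Rightarrow> enat" where
  "path_weight w p = sum_list (map (\<lambda>(a, b). w a b) (zip p (tl p)))"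

definition paths_between :: "'a set \<Rightarrow> ('a \<times> 'a) set \<Rightarrow> 'a \<Rightarrow> 'a \<Rightarrow> 'a list set" where
  "paths_between V E u v = {p. is_path V E p \<and> hd p = u \<and> last p = v}"

definition gdist :: "'a set \<Rightarrow> ('a \<times> 'a) set \<Rightarrow> ('a \<Rightarrow> 'a \<Rightarrow> enat) \<Rightarrow> 'a \<Rightarrow> 'a \<Rightarrow> enat" where
  "gdist V E w u v = (INF p \<in> paths_between V E u v. path_weight w p)"

text \<open>h-hop distance: minimum weight over u-v paths with at most h edges.\<close>
definition hop_dist :: "'a set \<Rightarrow> ('a \<times> 'a) set \<Rightarrow> ('a \<Rightarrow> 'a \<Rightarrow> enat) \<Rightarrow> nat \<Rightarrow> 'a \<Rightarrow> 'a \<Rightarrow> enat" where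
  "hop_dist V E w h u v =
     (INF p \<in> {p \<in> paths_between V E u v. length p \<le> Suc h}. path_weight w p)"

definition shortest_path :: "'a set \<Rightarrow> ('a \<times> 'a) set \<Rightarrow> ('a \<Rightarrow> 'a \<Rightarrow> enat) \<Rightarrow> 'a \<Rightarrow> 'a \<Rightarrow> 'a list \<Rightarrow> bool" where
  "shortest_path V E w u v p \<longleftrightarrow> p \<in> paths_between V E u v \<and> path_weight w p = gdist V E w u v"

end

theory Submission
  imports Defs
begin

text \<open>Both bounds hold edge by edge. Every edge of G' weighs at least the G-distance of its
  endpoints: an H-edge (x, y) weighs dt x y, which dominates dist_G(x, y), so by the triangle
  inequality dist_H dominates dist_G as well; hence every s-v path of G' is at least as heavy
  as dist_G(s, v). Conversely every edge of G survives in G' with at most twice its weight,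
  so a shortest s-v path of G has weight at most twice as large in G'.\<close>

lemma path_weight_simps [simp]:
  "path_weight w [] = 0"
  "path_weight w [a] = 0"
  "path_weight w (a # b # r) = w a b + path_weight w (b # r)"
  by (simp_all add: path_weight_def)

lemma path_weight_append:
  "path_weight w (xs @ y # zs) = path_weight w (xs @ [y]) + path_weight w (y # zs)"
  by (induction xs rule: induct_list012) (auto simp: add.assoc)

lemma is_path_iff_successively:
  "is_path V E p \<longleftrightarrow>
     p \<noteq> [] \<and> set p \<subseteq> V \<and> distinct p \<and> successively (\<lambda>a b. (a, b) \<in> E) p"
  by (auto simp: is_path_def successively_conv_nth)

lemma walk_shortcut_to_path:
  fixes w :: "'a \<Rightarrow> 'a \<Rightarrow> enat"
  assumes "successively (\<lambda>a b. (a, b) \<in> E) q" "q \<noteq> []" "set q \<subseteq> V"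
  shows "\<exists>p \<in> paths_between V E (hd q) (last q). path_weight w p \<le> path_weight w q"
  using assms
proof (induction q rule: induct_list012)
  case (2 a)
  then show ?case
    by (intro bexI[of _ "[a]"]) (auto simp: paths_between_def is_path_iff_successively)
next
  case (3 a b r)
  then obtain p where p: "p \<in> paths_between V E b (last (b # r))"
    and p_weight: "path_weight w p \<le> path_weight w (b # r)"
    by auto
  have p_path: "is_path V E p" and p_hd: "hd p = b" and p_last: "last p = last (b # r)"
    using p by (auto simp: paths_between_def)
  show ?case
  proof (cases "a \<in> set p")
    case True
    then obtain ys zs where p_split: "p = ys @ a # zs" by (meson split_list)
    have "path_weight w p \<le> path_weight w (a # b # r)"
      using p_weight by (simp add: add_increasing)
    have "a # zs \<in> paths_between V E a (last (b # r))"
      using p_path p_last p_split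
      by (auto simp: paths_between_def is_path_iff_successively successively_append_iff)
    moreover have "path_weight w (a # zs) \<le> path_weight w p"
      using p_split path_weight_append[of w ys a zs] by simp
    ultimately show ?thesis
      using \<open>path_weight w p \<le> path_weight w (a # b # r)\<close> order_trans by fastforce
  next
    case False
    obtain t where "p = b # t"
      using p_path p_hd by (cases p) (auto simp: is_path_iff_successively)
    then have "a # p \<in> paths_between V E a (last (b # r))"
      using p_path p_last False "3.prems" by (auto simp: paths_between_def is_path_iff_successively)
    moreover have "path_weight w (a # p) \<le> path_weight w (a # b # r)"
      using p_weight \<open>p = b # t\<close> by (simp add: add_left_mono)
    ultimately show ?thesis by auto
  qed
qed simp

lemma gdist_le_path_weight:
  "p \<in> paths_between V E u v \<Longrightarrow> gdist V E w u v \<le> path_weight w p"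
  unfolding gdist_def by (rule INF_lower)

lemma gdist_attained:
  assumes "gdist V E w u v \<noteq> \<infinity>"
  obtains p where "p \<in> paths_between V E u v" "gdist V E w u v = path_weight w p"
proof -
  obtain p0 where "p0 \<in> paths_between V E u v"
    using assms by (force simp: gdist_def top_enat_def)
  then have "gdist V E w u v \<in> path_weight w ` paths_between V E u v"
    unfolding gdist_def by (rule wellorder_InfI[OF imageI])
  then show ?thesis using that by blast
qed

lemma gdist_le_walk_weight:
  assumes "successively (\<lambda>a b. (a, b) \<in> E) q" "q \<noteq> []" "set q \<subseteq> V"
  shows "gdist V E w (hd q) (last q) \<le> path_weight w q"
proof -
  obtain p where "p \<in> paths_between V E (hd q) (last q)" "path_weight w p \<le> path_weight w q"
    using walk_shortcut_to_path[OF assms] by blast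
  then show ?thesis using gdist_le_path_weight order_trans by metis
qed

lemma gdist_self: "u \<in> V \<Longrightarrow> gdist V E w u u = 0"
  using gdist_le_walk_weight[of E "[u]" V w] by simp

lemma gdist_le_edge_weight: "(a, b) \<in> E \<Longrightarrow> E \<subseteq> V \<times> V \<Longrightarrow> gdist V E w a b \<le> w a b"
  using gdist_le_walk_weight[of E "[a, b]" V w] by auto

lemma gdist_triangle: "gdist V E w u x \<le> gdist V E w u y + gdist V E w y x"
proof (cases "gdist V E w u y = \<infinity> \<or> gdist V E w y x = \<infinity>")
  case False
  then obtain p1 p2 where p1: "p1 \<in> paths_between V E u y" "gdist V E w u y = path_weight w p1"
    and p2: "p2 \<in> paths_between V E y x" "gdist V E w y x = path_weight w p2"
    using gdist_attained by metis
  have p1_ys: "p1 = butlast p1 @ [y]"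
    using p1(1) by (auto simp: paths_between_def is_path_def)
  have "p2 \<noteq> []" "hd p2 = y"
    using p2(1) by (auto simp: paths_between_def is_path_def)
  then have p2_zs: "p2 = y # tl p2"
    by (metis hd_Cons_tl)
  let ?q = "butlast p1 @ y # tl p2"
  have "successively (\<lambda>a b. (a, b) \<in> E) (butlast p1 @ [y])"
    "successively (\<lambda>a b. (a, b) \<in> E) (y # tl p2)"
    using p1(1) p2(1) p1_ys p2_zs by (simp_all add: paths_between_def is_path_iff_successively)
  then have "successively (\<lambda>a b. (a, b) \<in> E) ?q"
    by (simp add: successively_append_iff)
  moreover have "set ?q \<subseteq> V"
    using p1(1) p2(1) by (auto simp: paths_between_def is_path_def dest: in_set_butlastD list.set_sel(2))
  moreover have "hd ?q = u"
    using p1(1) p1_ys by (cases "butlast p1") (auto simp: paths_between_def)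
  moreover have "last ?q = x"
    using p2(1) p2_zs[symmetric] \<open>p2 \<noteq> []\<close> by (simp add: paths_between_def)
  ultimately have "gdist V E w u x \<le> path_weight w ?q"
    using gdist_le_walk_weight[of E ?q V w] by simp
  also have "\<dots> = gdist V E w u y + gdist V E w y x"
    using p1(2) p2(2) p1_ys p2_zs path_weight_append[of w "butlast p1" y "tl p2"] by simp
  finally show ?thesis .
qed auto

lemma gdist_le_walk_weight_if_edges_dominated:
  assumes "successively (\<lambda>a b. (a, b) \<in> E') q" "q \<noteq> []" "set q \<subseteq> V"
    and dominated: "\<And>a b. (a, b) \<in> E' \<Longrightarrow> gdist V E w a b \<le> w' a b"
  shows "gdist V E w (hd q) (last q) \<le> path_weight w' q"
  using assms(1-3)
proof (induction q rule: induct_list012)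
  case (2 a)
  then show ?case by (simp add: gdist_self)
next
  case (3 a b r)
  then have "gdist V E w a b + gdist V E w b (last (b # r)) \<le> path_weight w' (a # b # r)"
    using dominated by (auto intro: add_mono)
  then show ?case using gdist_triangle[of V E w a "last (b # r)" b] by simp
qed simp

lemma gdist_le_gdist_if_edges_dominated:
  assumes "V' \<subseteq> V" and "\<And>a b. (a, b) \<in> E' \<Longrightarrow> gdist V E w a b \<le> w' a b"
  shows "gdist V E w u v \<le> gdist V' E' w' u v"
  unfolding gdist_def[of V' E' w']
proof (rule INF_greatest)
  fix p assume "p \<in> paths_between V' E' u v"
  then show "gdist V E w u v \<le> path_weight w' p"
    using gdist_le_walk_weight_if_edges_dominated[of E' p V E w w'] assms
    by (auto simp: paths_between_def is_path_iff_successively)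
qed

lemma path_weight_le_scaled:
  fixes w w' :: "'a \<Rightarrow> 'a \<Rightarrow> enat"
  assumes "successively (\<lambda>a b. (a, b) \<in> E) p" and "\<And>a b. (a, b) \<in> E \<Longrightarrow> w' a b \<le> c * w a b"
  shows "path_weight w' p \<le> c * path_weight w p"
  using assms(1)
  by (induction p rule: induct_list012) (auto simp: distrib_left intro: add_mono assms(2))

lemma gdist_le_scaled_gdist:
  fixes w w' :: "'a \<Rightarrow> 'a \<Rightarrow> enat"
  assumes "E \<subseteq> E'" and scaled: "\<And>a b. (a, b) \<in> E \<Longrightarrow> w' a b \<le> c * w a b" and "c \<noteq> 0"
  shows "gdist V E' w' u v \<le> c * gdist V E w u v"
proof (cases "gdist V E w u v = \<infinity>")
  case True
  moreover have "c * \<infinity> = \<infinity>"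
    using \<open>c \<noteq> 0\<close> by (simp add: imult_is_infinity)
  ultimately show ?thesis by simp
next
  case False
  then obtain p where p: "p \<in> paths_between V E u v" "gdist V E w u v = path_weight w p"
    by (rule gdist_attained)
  have walk: "successively (\<lambda>a b. (a, b) \<in> E) p"
    using p(1) by (simp add: paths_between_def is_path_iff_successively)
  have "successively (\<lambda>a b. (a, b) \<in> E') p"
    by (rule successively_mono[OF walk]) (use \<open>E \<subseteq> E'\<close> in blast)
  then have "p \<in> paths_between V E' u v"
    using p(1) by (simp add: paths_between_def is_path_iff_successively)
  then have "gdist V E' w' u v \<le> path_weight w' p" by (rule gdist_le_path_weight)
  also have "\<dots> \<le> c * path_weight w p"
    using walk scaled by (rule path_weight_le_scaled)
  finally show ?thesis using p(2) by simp
qed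

theorem lemma3p2:
  fixes V :: "'a set" and E :: "('a \<times> 'a) set" and wG :: "'a \<Rightarrow> 'a \<Rightarrow> nat"
    and s :: 'a and h :: nat and C :: "'a set" and dt :: "'a \<Rightarrow> 'a \<Rightarrow> enat"
  assumes finV: "finite V"
    and EV: "E \<subseteq> V \<times> V"
    and sV: "s \<in> V"
    and h1: "1 \<le> h" and hn: "h \<le> card V"
    and CV: "C \<subseteq> V" and sC: "s \<in> C"
    and hit: "\<forall>u\<in>V. \<forall>v\<in>V.
       (\<exists>p. shortest_path V E (\<lambda>a b. enat (wG a b)) u v p \<and> length p = (h + 1) div 2) \<longrightarrow>
       (\<exists>p x. shortest_path V E (\<lambda>a b. enat (wG a b)) u v p \<and> length p = (h + 1) div 2
              \<and> x \<in> set p \<and> x \<in> C)"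
    and dt_bounds: "\<forall>x\<in>C. \<forall>v\<in>V.
       gdist V E (\<lambda>a b. enat (wG a b)) x v \<le> dt x v \<and>
       dt x v \<le> 2 * hop_dist V E (\<lambda>a b. enat (wG a b)) h x v"
  shows "\<forall>v\<in>V.
     gdist V E (\<lambda>a b. enat (wG a b)) s v
       \<le> gdist V (E \<union> ({s} \<times> C))
           (\<lambda>a b. if (a, b) \<in> E \<and> (a, b) \<in> {s} \<times> C
                  then min (gdist C (C \<times> C) dt a b) (2 * enat (wG a b))
                  else if (a, b) \<in> E then 2 * enat (wG a b)
                  else gdist C (C \<times> C) dt a b) s v
     \<and> gdist V (E \<union> ({s} \<times> C))
           (\<lambda>a b. if (a, b) \<in> E \<and> (a, b) \<in> {s} \<times> C
                  then min (gdist C (C \<times> C) dt a b) (2 * enat (wG a b))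
                  else if (a, b) \<in> E then 2 * enat (wG a b)
                  else gdist C (C \<times> C) dt a b) s v
       \<le> 2 * gdist V E (\<lambda>a b. enat (wG a b)) s v"
proof (intro ballI conjI)
  fix v
  let ?w = "\<lambda>a b. enat (wG a b)"
  have H_dominates_G: "gdist V E ?w a b \<le> gdist C (C \<times> C) dt a b" for a b
    using CV dt_bounds by (intro gdist_le_gdist_if_edges_dominated) auto
  have G_edge: "gdist V E ?w a b \<le> 2 * enat (wG a b)" if "(a, b) \<in> E" for a b
    using gdist_le_edge_weight[OF that EV, of ?w] by (auto simp: mult_2 intro: order_trans)
  show "gdist V E ?w s v \<le> gdist V (E \<union> ({s} \<times> C))
           (\<lambda>a b. if (a, b) \<in> E \<and> (a, b) \<in> {s} \<times> C
                  then min (gdist C (C \<times> C) dt a b) (2 * enat (wG a b))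
                  else if (a, b) \<in> E then 2 * enat (wG a b)
                  else gdist C (C \<times> C) dt a b) s v"
    using H_dominates_G G_edge by (intro gdist_le_gdist_if_edges_dominated) auto
  show "gdist V (E \<union> ({s} \<times> C))
           (\<lambda>a b. if (a, b) \<in> E \<and> (a, b) \<in> {s} \<times> C
                  then min (gdist C (C \<times> C) dt a b) (2 * enat (wG a b))
                  else if (a, b) \<in> E then 2 * enat (wG a b)
                  else gdist C (C \<times> C) dt a b) s v
       \<le> 2 * gdist V E ?w s v"
    by (intro gdist_le_scaled_gdist) (auto simp: min_le_iff_disj)
qed

end
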